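(* There is an absolute constant $C>0$ such that the following holds. Let $(G,s,t)$ be an oriented serial superedge on $n$ vertices with principal subgraphs $(G_1,s_1,t_1),\dots,(G_k,s_k,t_k)$, each $G_i$ non-serial and having $n_i$ vertices. Then $$\sum_{i=1}^k n_i\,\big|\mathsf{NT}(G_i)/\mathrm{Aut}_{\mathrm{or}}(G_i,s_i,t_i)\big|\le C\,n\,\big|\mathsf{NT}(G)/\mathrm{Aut}_{\mathrm{or}}(G,s,t)\big|,$$ i.e. the left side is $O\big(n\,|\mathsf{NT}(G)/\mathrm{Aut}_{\mathrm{or}}(G,s,t)|\big)$.
   Context: All graphs are finite, simple and undirected. An oriented series-parallel graph is a triple $(G,s,t)$ where $G$ is a graph and $s\neq t$ are vertices, defined recursively: (i) $G$ is a single edge with vertex set $\{s,t\}$; or (ii) (serial superedge) there are $k\ge 2$ oriented series-parallel graphs $(G_1,s_1,t_1),\dots,(G_k,s_k,t_k)$ with $s_1=s$, $t_k=t$, $t_i=s_{i+1}$ for $1\le i<k$, $V(G_i)\cap V(G_{i+1})=\{s_{i+1}\}$, $V(G_i)\cap V(G_j)=\emptyset$ for $|i-j|\ge2$, and $G=G_1\cup\dots\cup G_k$; or (iii) (parallel superedge) there are $k\ge2$ oriented series-parallel graphs $(G_1,s,t),\dots,(G_k,s,t)$ with $V(G_i)\cap V(G_j)=\{s,t\}$ for $i\neq j$ and $G=G_1\cup\dots\cup G_k$. The $G_i$ are the principal subgraphs; a graph is non-serial if it is not a serial superedge. $\mathrm{Aut}_{\mathrm{or}}(H,u,v)$ is the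 group of automorphisms of $H$ fixing $u$ and $v$. A near tree of $H$ is a spanning subgraph obtained from a spanning tree of $H$ by deleting one edge; $\mathsf{NT}(H)$ is the set of near trees, and $\mathsf{NT}(H)/\Gamma$ the set of orbits under the group $\Gamma$ (near trees $A,B$ in the same orbit iff $A=\sigma(B)$ for some $\sigma\in\Gamma$). *)

theory Defs
  imports Complex_Main
begin

text \<open>Graphs are given by a vertex set V :: nat set and an edge set E :: nat set set
(each edge a 2-element set). An oriented graph (G,s,t) is a tuple (V,E,s,t).\<close>

type_synonym ograph = "nat set \<times> nat set set \<times> nat \<times> nat"

definition verts :: "ograph \<Rightarrow> nat set" where "verts G = fst G"
definition edges :: "ograph \<Rightarrow> nat set set" where "edges G = fst (snd G)"
definition src :: "ograph \<Rightarrow> nat" where "src G = fst (snd (snd G))"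
definition tgt :: "ograph \<Rightarrow> nat" where "tgt G = snd (snd (snd G))"

definition serial_cond :: "ograph \<Rightarrow> ograph list \<Rightarrow> bool" where
  "serial_cond G Gs \<longleftrightarrow>
     (let k = length Gs in
       k \<ge> 2 \<and>
       src (Gs ! 0) = src G \<and> tgt (Gs ! (k - 1)) = tgt G \<and>
       (\<forall>i. i + 1 < k \<longrightarrow> tgt (Gs ! i) = src (Gs ! (i + 1))) \<and>
       (\<forall>i. i + 1 < k \<longrightarrow> verts (Gs ! i) \<inter> verts (Gs ! (i + 1)) = {src (Gs ! (i + 1))}) \<and>
       (\<forall>i j. i < k \<and> j < k \<and> i + 2 \<le> j \<longrightarrow> verts (Gs ! i) \<inter> verts (Gs ! j) = {}) \<and>
       verts G = (\<Union>H\<in>set Gs. verts H) \<and> edges G = (\<Union>H\<in>set Gs. edges H))"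

definition parallel_cond :: "ograph \<Rightarrow> ograph list \<Rightarrow> bool" where
  "parallel_cond G Gs \<longleftrightarrow>
     (let k = length Gs in
       k \<ge> 2 \<and>
       (\<forall>i<k. src (Gs ! i) = src G \<and> tgt (Gs ! i) = tgt G) \<and>
       (\<forall>i j. i < k \<and> j < k \<and> i \<noteq> j \<longrightarrow> verts (Gs ! i) \<inter> verts (Gs ! j) = {src G, tgt G}) \<and>
       verts G = (\<Union>H\<in>set Gs. verts H) \<and> edges G = (\<Union>H\<in>set Gs. edges H))"

inductive osp :: "ograph \<Rightarrow> bool" where
  single_edge: "s \<noteq> t \<Longrightarrow> osp ({s, t}, {{s, t}}, s, t)"
| serial: "serial_cond G Gs \<Longrightarrow> (\<forall>H\<in>set Gs. osp H) \<Longrightarrow> osp G"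
| parallel: "parallel_cond G Gs \<Longrightarrow> (\<forall>H\<in>set Gs. osp H) \<Longrightarrow> osp G"

definition serial_superedge_with :: "ograph \<Rightarrow> ograph list \<Rightarrow> bool" where
  "serial_superedge_with G Gs \<longleftrightarrow> serial_cond G Gs \<and> (\<forall>H\<in>set Gs. osp H)"

definition non_serial :: "ograph \<Rightarrow> bool" where
  "non_serial G \<longleftrightarrow> \<not> (\<exists>Gs. serial_superedge_with G Gs)"

definition connected_on :: "nat set \<Rightarrow> nat set set \<Rightarrow> bool" where
  "connected_on V T \<longleftrightarrow> (\<forall>u\<in>V. \<forall>v\<in>V. (\<lambda>x y. {x, y} \<in> T)\<^sup>*\<^sup>* u v)"

definition acyclic_edges :: "nat set set \<Rightarrow> bool" where
  "acyclic_edges T \<longleftrightarrow> \<not> (\<exists>cs. length cs \<ge> 3 \<and> distinct cs \<and>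
       (\<forall>i<length cs. {cs ! i, cs ! ((i + 1) mod length cs)} \<in> T))"

definition spanning_tree :: "nat set \<Rightarrow> nat set set \<Rightarrow> nat set set \<Rightarrow> bool" where
  "spanning_tree V E T \<longleftrightarrow> T \<subseteq> E \<and> connected_on V T \<and> acyclic_edges T"

definition near_trees :: "nat set \<Rightarrow> nat set set \<Rightarrow> nat set set set" where
  "near_trees V E = {F. \<exists>T. spanning_tree V E T \<and> (\<exists>e\<in>T. F = T - {e})}"

definition aut_or :: "ograph \<Rightarrow> (nat \<Rightarrow> nat) set" where
  "aut_or G = {\<sigma>. bij_betw \<sigma> (verts G) (verts G) \<and>
      (\<forall>x\<in>verts G. \<forall>y\<in>verts G. {x, y} \<in> edges G \<longleftrightarrow> {\<sigma> x, \<sigma> y} \<in> edges G) \<and>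
      \<sigma> (src G) = src G \<and> \<sigma> (tgt G) = tgt G}"

definition img_edges :: "(nat \<Rightarrow> nat) \<Rightarrow> nat set set \<Rightarrow> nat set set" where
  "img_edges \<sigma> B = (\<lambda>e. \<sigma> ` e) ` B"

definition nt_orbits :: "ograph \<Rightarrow> nat set set set set" where
  "nt_orbits G = (\<lambda>A. {B \<in> near_trees (verts G) (edges G).
       \<exists>\<sigma>\<in>aut_or G. A = img_edges \<sigma> B}) ` near_trees (verts G) (edges G)"

end

theory Submission
  imports Defs
begin

text \<open>Every oriented series-parallel graph is connected, and every vertex other than \<open>t\<close> can be
  reached from \<open>s\<close> without passing through \<open>t\<close>. Hence in a serial superedge the junction vertices
  \<open>t\<^sub>1, \<dots>, t\<^sub>k\<^sub>-\<^sub>1\<close> separate \<open>s\<close> from \<open>t\<close>. Distinct separating vertices have distinct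
  distances from \<open>s\<close>, so every automorphism fixing \<open>s\<close> and \<open>t\<close> fixes all junctions and maps each
  principal subgraph \<open>G\<^sub>i\<close> onto itself. Extending a near tree of \<open>G\<^sub>i\<close> by spanning trees of the
  other parts to a near tree of \<open>G\<close> therefore induces an injection of
  \<open>NT(G\<^sub>i)/Aut\<^sub>o\<^sub>r(G\<^sub>i)\<close> into \<open>NT(G)/Aut\<^sub>o\<^sub>r(G)\<close>. As the parts overlap only in junctions,
  \<open>\<Sum> n\<^sub>i \<le> 2 n\<close>, and the bound holds with \<open>C = 2\<close>.\<close>

section \<open>Walks avoiding a vertex\<close>

definition adj :: "nat set set \<Rightarrow> nat \<Rightarrow> nat \<Rightarrow> bool" where
  "adj E x y \<longleftrightarrow> {x, y} \<in> E"

definition adj_avoiding :: "nat set set \<Rightarrow> nat \<Rightarrow> nat \<Rightarrow> nat \<Rightarrow> bool" where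
  "adj_avoiding E c x y \<longleftrightarrow> adj E x y \<and> x \<noteq> c \<and> y \<noteq> c"

lemma adj_rtranclp_sym: "(adj E)\<^sup>*\<^sup>* x y \<Longrightarrow> (adj E)\<^sup>*\<^sup>* y x"
proof -
  have "symp (adj E)" by (auto intro: sympI simp: adj_def insert_commute)
  then show "(adj E)\<^sup>*\<^sup>* x y \<Longrightarrow> (adj E)\<^sup>*\<^sup>* y x" by (metis symp_rtranclp sympD)
qed

lemma adj_rtranclp_mono: "E \<subseteq> E' \<Longrightarrow> (adj E)\<^sup>*\<^sup>* x y \<Longrightarrow> (adj E')\<^sup>*\<^sup>* x y"
  by (erule rtranclp_mono[THEN predicate2D, rotated]) (auto simp: adj_def)

lemma adj_avoiding_rtranclp_mono:
  "E \<subseteq> E' \<Longrightarrow> (adj_avoiding E c)\<^sup>*\<^sup>* x y \<Longrightarrow> (adj_avoiding E' c)\<^sup>*\<^sup>* x y"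
  by (erule rtranclp_mono[THEN predicate2D, rotated]) (auto simp: adj_avoiding_def adj_def)

lemma adj_rtranclp_avoiding:
  assumes "(adj E)\<^sup>*\<^sup>* x y" and "\<forall>e\<in>E. e \<subseteq> W" and "c \<notin> W"
  shows "(adj_avoiding E c)\<^sup>*\<^sup>* x y"
  using assms(1)
  by (rule rtranclp_mono[THEN predicate2D, rotated])
    (use assms(2,3) in \<open>fastforce simp: adj_avoiding_def adj_def\<close>)

lemma adj_avoiding_rtranclp_from_avoided: "(adj_avoiding E c)\<^sup>*\<^sup>* c v \<Longrightarrow> v = c"
  by (erule converse_rtranclpE) (auto simp: adj_avoiding_def)

lemma adj_avoiding_rtranclp_avoids: "(adj_avoiding E c)\<^sup>*\<^sup>* x y \<Longrightarrow> x \<noteq> c \<Longrightarrow> y \<noteq> c"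
  by (induction rule: rtranclp_induct) (auto simp: adj_avoiding_def)

lemma adj_avoiding_rtranclp_if_closer:
  assumes "(adj E ^^ n) r x" and "x \<noteq> c" and "\<forall>m<n. \<not> (adj E ^^ m) r c"
  shows "(adj_avoiding E c)\<^sup>*\<^sup>* r x"
  using assms
proof (induction n arbitrary: x)
  case 0
  then show ?case by simp
next
  case (Suc n)
  then obtain y where y: "(adj E ^^ n) r y" "adj E y x" by auto
  then have "y \<noteq> c" using Suc.prems(3) by auto
  then have "(adj_avoiding E c)\<^sup>*\<^sup>* r y" using Suc y by auto
  moreover have "adj_avoiding E c y x" using y(2) \<open>y \<noteq> c\<close> Suc.prems(2) by (simp add: adj_avoiding_def)
  ultimately show ?case by (rule rtranclp.rtrancl_into_rtrancl)
qed

lemma connected_on_iff_adj: "connected_on V T \<longleftrightarrow> (\<forall>u\<in>V. \<forall>v\<in>V. (adj T)\<^sup>*\<^sup>* u v)"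
  unfolding connected_on_def adj_def[abs_def] by simp

lemma connected_on_mono:
  assumes "connected_on V T" and "T \<subseteq> T'"
  shows "connected_on V T'"
  using assms(1) adj_rtranclp_mono[OF assms(2)] unfolding connected_on_iff_adj by blast

lemma connected_onI_root:
  "r \<in> V \<Longrightarrow> (\<And>v. v \<in> V \<Longrightarrow> (adj T)\<^sup>*\<^sup>* r v) \<Longrightarrow> connected_on V T"
  unfolding connected_on_iff_adj by (meson adj_rtranclp_sym rtranclp_trans)

section \<open>Graphs with a source and a target\<close>

definition st_graph :: "ograph \<Rightarrow> bool" where
  "st_graph H \<longleftrightarrow> finite (verts H) \<and> src H \<in> verts H \<and> tgt H \<in> verts H \<and> src H \<noteq> tgt H \<and>
     (\<forall>e\<in>edges H. \<exists>x y. e = {x, y} \<and> x \<noteq> y \<and> x \<in> verts H \<and> y \<in> verts H) \<and>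
     (\<forall>v\<in>verts H. (adj (edges H))\<^sup>*\<^sup>* (src H) v) \<and>
     (\<forall>v\<in>verts H - {tgt H}. (adj_avoiding (edges H) (tgt H))\<^sup>*\<^sup>* (src H) v)"

lemma st_graphD:
  assumes "st_graph H"
  shows "finite (verts H)" "src H \<in> verts H" "tgt H \<in> verts H" "src H \<noteq> tgt H"
    "\<forall>e\<in>edges H. \<exists>x y. e = {x, y} \<and> x \<noteq> y \<and> x \<in> verts H \<and> y \<in> verts H"
    "v \<in> verts H \<Longrightarrow> (adj (edges H))\<^sup>*\<^sup>* (src H) v"
    "v \<in> verts H \<Longrightarrow> v \<noteq> tgt H \<Longrightarrow> (adj_avoiding (edges H) (tgt H))\<^sup>*\<^sup>* (src H) v"
  using assms unfolding st_graph_def by simp_all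

lemma st_graph_edge:
  "st_graph H \<Longrightarrow> {x, y} \<in> edges H \<Longrightarrow> x \<in> verts H \<and> y \<in> verts H \<and> x \<noteq> y"
proof -
  assume "st_graph H" "{x, y} \<in> edges H"
  then obtain a b where "{x, y} = {a, b}" "a \<noteq> b" "a \<in> verts H" "b \<in> verts H"
    using st_graphD(5)[of H] by fastforce
  then show ?thesis by (metis doubleton_eq_iff)
qed

lemma st_graph_edge_subset: "st_graph H \<Longrightarrow> e \<in> edges H \<Longrightarrow> e \<subseteq> verts H"
  using st_graphD(5)[of H] by fastforce

lemma st_graph_finite_edges: "st_graph H \<Longrightarrow> finite (edges H)"
proof -
  assume H: "st_graph H"
  then have "edges H \<subseteq> Pow (verts H)" using st_graph_edge_subset by blast
  then show ?thesis using st_graphD(1)[OF H] by (simp add: finite_subset)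
qed

lemma st_graph_connected: "st_graph H \<Longrightarrow> connected_on (verts H) (edges H)"
  using connected_onI_root[OF st_graphD(2)] st_graphD(6) by blast

locale serial_decomp =
  fixes G :: ograph and Gs :: "ograph list"
  assumes serial: "serial_cond G Gs" and st_graph_parts: "\<forall>H\<in>set Gs. st_graph H"
begin

abbreviation "k \<equiv> length Gs"
abbreviation "V i \<equiv> verts (Gs ! i)"
abbreviation "E i \<equiv> edges (Gs ! i)"
abbreviation "s i \<equiv> src (Gs ! i)"
abbreviation "t i \<equiv> tgt (Gs ! i)"

lemma length_ge_2: "k \<ge> 2"
  and src_first: "s 0 = src G"
  and tgt_last: "t (k - 1) = tgt G"
  and tgt_eq_src_Suc: "i + 1 < k \<Longrightarrow> t i = s (i + 1)"
  and verts_Int_Suc: "i + 1 < k \<Longrightarrow> V i \<inter> V (i + 1) = {s (i + 1)}"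
  and verts_Int_far: "j < k \<Longrightarrow> i + 2 \<le> j \<Longrightarrow> V i \<inter> V j = {}"
  using serial unfolding serial_cond_def Let_def by simp_all

lemma verts_G: "verts G = (\<Union>i<k. V i)"
  and edges_G: "edges G = (\<Union>i<k. E i)"
  using serial unfolding serial_cond_def Let_def by (auto simp: set_conv_nth)

lemma st_graph_part: "i < k \<Longrightarrow> st_graph (Gs ! i)"
  using st_graph_parts by simp

lemma src_in: "i < k \<Longrightarrow> s i \<in> V i"
  and tgt_in: "i < k \<Longrightarrow> t i \<in> V i"
  and src_ne_tgt: "i < k \<Longrightarrow> s i \<noteq> t i"
  using st_graph_part st_graphD(2-4) by blast+

lemma verts_part_subset: "i < k \<Longrightarrow> V i \<subseteq> verts G"
  and edges_part_subset: "i < k \<Longrightarrow> E i \<subseteq> edges G"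
  using verts_G edges_G by auto

lemma finite_verts_G: "finite (verts G)"
  using verts_G st_graph_part st_graphD(1) by auto

lemma verts_Int_less: "i < j \<Longrightarrow> j < k \<Longrightarrow> x \<in> V i \<Longrightarrow> x \<in> V j \<Longrightarrow> j = i + 1 \<and> x = s j"
  using verts_Int_Suc[of i] verts_Int_far[of j i] by (cases "j = i + 1") auto

lemma edge_in_part_iff_subset:
  assumes "e \<in> edges G" and "i < k"
  shows "e \<in> E i \<longleftrightarrow> e \<subseteq> V i"
proof
  show "e \<in> E i \<Longrightarrow> e \<subseteq> V i" using assms(2) st_graph_edge_subset st_graph_part by blast
next
  assume sub: "e \<subseteq> V i"
  obtain m where m: "m < k" "e \<in> E m" using assms(1) edges_G by auto
  obtain x y where xy: "e = {x, y}" "x \<noteq> y" "x \<in> V m" "y \<in> V m"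
    using st_graphD(5)[OF st_graph_part[OF m(1)]] m(2) by blast
  have "m = i"
    using verts_Int_less[of m i] verts_Int_less[of i m] xy sub m(1) assms(2)
    by (metis insert_subset linorder_neqE_nat)
  then show "e \<in> E i" using m by simp
qed

lemma edge_part_unique:
  assumes "i < k" "j < k" "e \<in> E i" "e \<in> E j"
  shows "i = j"
proof -
  obtain x y where xy: "e = {x, y}" "x \<noteq> y" "x \<in> V i" "y \<in> V i"
    using st_graphD(5)[OF st_graph_part[OF assms(1)]] assms(3) by blast
  have "x \<in> V j" "y \<in> V j" using assms edges_part_subset edge_in_part_iff_subset xy(1) by blast+
  then show ?thesis
    using verts_Int_less[of i j] verts_Int_less[of j i] xy assms(1,2) by (metis linorder_neqE_nat)
qed

lemma src_G_notin: "0 < j \<Longrightarrow> j < k \<Longrightarrow> src G \<notin> V j"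
proof
  assume "0 < j" "j < k" "src G \<in> V j"
  then have "j = 1" "src G = s 1"
    using verts_Int_less[of 0 j "src G"] src_first src_in[of 0] by force+
  then have "s 0 = t 0" using src_first tgt_eq_src_Suc[of 0] \<open>j < k\<close> by simp
  moreover have "0 < k" using \<open>j < k\<close> by linarith
  ultimately show False using src_ne_tgt by blast
qed

lemma tgt_G_notin: "i < k - 1 \<Longrightarrow> tgt G \<notin> V i"
proof
  assume "i < k - 1" "tgt G \<in> V i"
  then have "tgt G = s (k - 1)"
    using verts_Int_less[of i "k - 1" "tgt G"] tgt_last tgt_in[of "k - 1"] by auto
  moreover have "k - 1 < k" using length_ge_2 by simp
  ultimately show False using tgt_last src_ne_tgt[of "k - 1"] by simp
qed

lemma tgt_notin_earlier: "m < i \<Longrightarrow> i < k \<Longrightarrow> t i \<notin> V m"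
  using verts_Int_less[of m i "t i"] tgt_in[of i] src_ne_tgt[of i] by auto

lemma src_G_ne_tgt: "i < k \<Longrightarrow> src G \<noteq> t i"
  using src_first src_ne_tgt[of i] src_G_notin[of i] tgt_in[of i] by (cases "i = 0") auto

abbreviation reach_avoiding :: "nat \<Rightarrow> nat \<Rightarrow> bool" where
  "reach_avoiding c v \<equiv> (adj_avoiding (edges G) c)\<^sup>*\<^sup>* (src G) v"

lemma walk_in_part_avoiding_tgt:
  assumes "i < k" "m \<le> i" "v \<in> V m" "v \<noteq> t i"
  shows "(adj_avoiding (edges G) (t i))\<^sup>*\<^sup>* (s m) v"
proof -
  have m: "m < k" using assms by simp
  have "(adj_avoiding (E m) (t i))\<^sup>*\<^sup>* (s m) v"
  proof (cases "m < i")
    case True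
    then show ?thesis
      using adj_rtranclp_avoiding st_graphD(6)[OF st_graph_part[OF m] assms(3)]
        st_graph_edge_subset[OF st_graph_part[OF m]] tgt_notin_earlier[OF True assms(1)]
      by blast
  next
    case False
    then show ?thesis using st_graphD(7)[OF st_graph_part[OF m] assms(3)] assms by simp
  qed
  then show ?thesis using adj_avoiding_rtranclp_mono edges_part_subset[OF m] by blast
qed

lemma reach_avoiding_tgt:
  assumes "i < k" "m \<le> i" "v \<in> V m" "v \<noteq> t i"
  shows "reach_avoiding (t i) v"
  using assms(2-4)
proof (induction m arbitrary: v)
  case 0
  then show ?case using walk_in_part_avoiding_tgt[OF assms(1) 0] src_first by simp
next
  case (Suc m)
  have "t m \<noteq> t i" using tgt_in[of m] tgt_notin_earlier[of m i] Suc.prems assms(1) by force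
  then have "reach_avoiding (t i) (t m)" using Suc.IH[of "t m"] Suc.prems tgt_in[of m] assms(1) by simp
  moreover have "t m = s (Suc m)" using tgt_eq_src_Suc[of m] Suc.prems assms(1) by simp
  ultimately show ?case
    using walk_in_part_avoiding_tgt[OF assms(1) Suc.prems] by (metis rtranclp_trans)
qed

lemma reach_avoiding_tgtD:
  assumes "i < k" and "reach_avoiding (t i) v"
  shows "(\<exists>m\<le>i. v \<in> V m) \<and> v \<noteq> t i"
  using assms(2)
proof (induction rule: rtranclp_induct)
  case base
  show ?case using src_in[of 0] src_first src_G_ne_tgt[OF assms(1)] assms(1) by fastforce
next
  case (step y z)
  then obtain m' where m': "m' \<le> i" "y \<in> V m'" "y \<noteq> t i" by blast
  have yz: "{y, z} \<in> edges G" "z \<noteq> t i" using step(2) by (auto simp: adj_avoiding_def adj_def)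
  then obtain m where m: "m < k" "{y, z} \<in> E m" using edges_G by auto
  have "y \<in> V m" "z \<in> V m" using st_graph_edge[OF st_graph_part[OF m(1)] m(2)] by auto
  moreover have "m \<le> i"
  proof (rule ccontr)
    assume "\<not> m \<le> i"
    then have "m = m' + 1" "y = s m" using verts_Int_less[of m' m y] m' m \<open>y \<in> V m\<close> by auto
    moreover have "m' = i" using m'(1) \<open>\<not> m \<le> i\<close> \<open>m = m' + 1\<close> by simp
    ultimately have "y = t i" using tgt_eq_src_Suc[of i] m(1) by simp
    then show False using m' by simp
  qed
  ultimately show ?case using yz by auto
qed

lemma connected_on_Union_parts:
  assumes "\<And>m. m < k \<Longrightarrow> connected_on (V m) (X m)"
  shows "connected_on (verts G) (\<Union>m<k. X m)"
proof (rule connected_onI_root)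
  let ?X = "\<Union>m<k. X m"
  have walk: "(adj ?X)\<^sup>*\<^sup>* x y" if "m < k" "x \<in> V m" "y \<in> V m" for m x y
  proof -
    have "(adj (X m))\<^sup>*\<^sup>* x y" using assms[OF that(1)] that(2,3) unfolding connected_on_iff_adj by simp
    moreover have "X m \<subseteq> ?X" using that(1) by auto
    ultimately show ?thesis using adj_rtranclp_mono by blast
  qed
  have to_src: "m < k \<Longrightarrow> (adj ?X)\<^sup>*\<^sup>* (src G) (s m)" for m
  proof (induction m)
    case 0
    then show ?case using src_first by simp
  next
    case (Suc m)
    then have "m < k" by simp
    then have "(adj ?X)\<^sup>*\<^sup>* (s m) (t m)" using walk src_in tgt_in by simp
    moreover have "t m = s (Suc m)" using tgt_eq_src_Suc[of m] Suc.prems by simp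
    ultimately show ?case using Suc.IH \<open>m < k\<close> rtranclp_trans by metis
  qed
  show "src G \<in> verts G" using src_in[of 0] src_first verts_G length_ge_2 by force
  fix v assume "v \<in> verts G"
  then obtain m where "m < k" "v \<in> V m" using verts_G by auto
  then show "(adj ?X)\<^sup>*\<^sup>* (src G) v" using to_src walk src_in by (meson rtranclp_trans)
qed

lemma st_graph_G: "st_graph G"
  unfolding st_graph_def
proof (intro conjI ballI)
  have last: "k - 1 < k" and first: "0 < k" using length_ge_2 by linarith+
  show src_G: "src G \<in> verts G" using src_in[OF first] src_first verts_part_subset[OF first] by auto
  show "tgt G \<in> verts G" using tgt_in[OF last] tgt_last verts_part_subset[OF last] by auto
  show "src G \<noteq> tgt G" using src_G_ne_tgt[OF last] tgt_last by simp
  show "finite (verts G)" by (rule finite_verts_G)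
  show "\<exists>x y. e = {x, y} \<and> x \<noteq> y \<and> x \<in> verts G \<and> y \<in> verts G" if e: "e \<in> edges G" for e
  proof -
    obtain m where m: "m < k" "e \<in> E m" using e edges_G by auto
    then obtain x y where "e = {x, y}" "x \<noteq> y" "x \<in> V m" "y \<in> V m"
      using st_graphD(5)[OF st_graph_part[OF m(1)]] by blast
    then show ?thesis using verts_part_subset[OF m(1)] by blast
  qed
  have "connected_on (verts G) (edges G)"
    using connected_on_Union_parts[of E] st_graph_connected[OF st_graph_part] edges_G by simp
  then show "(adj (edges G))\<^sup>*\<^sup>* (src G) v" if v: "v \<in> verts G" for v
    using src_G v unfolding connected_on_iff_adj by blast
  show "reach_avoiding (tgt G) v" if v: "v \<in> verts G - {tgt G}" for v
  proof -
    obtain m where "m < k" "v \<in> V m" "v \<noteq> t (k - 1)" using v verts_G tgt_last by auto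
    moreover have "m \<le> k - 1" using \<open>m < k\<close> by simp
    ultimately show ?thesis using reach_avoiding_tgt[OF last] tgt_last by simp
  qed
qed

end

lemma st_graph_parallel:
  assumes "parallel_cond G Gs" and "\<forall>H\<in>set Gs. st_graph H"
  shows "st_graph G"
proof -
  have len: "length Gs \<ge> 2"
    and ends: "\<forall>H\<in>set Gs. src H = src G \<and> tgt H = tgt G"
    and verts_G: "verts G = (\<Union>H\<in>set Gs. verts H)"
    and edges_G: "edges G = (\<Union>H\<in>set Gs. edges H)"
    using assms(1) unfolding parallel_cond_def Let_def by (auto simp: set_conv_nth)
  have st: "H \<in> set Gs \<Longrightarrow> st_graph H" for H using assms(2) by blast
  have sub: "H \<in> set Gs \<Longrightarrow> edges H \<subseteq> edges G" for H using edges_G by auto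
  have reach: "(adj (edges G))\<^sup>*\<^sup>* (src G) v \<and>
      (v \<noteq> tgt G \<longrightarrow> (adj_avoiding (edges G) (tgt G))\<^sup>*\<^sup>* (src G) v)" if "v \<in> verts G" for v
  proof -
    obtain H where H: "H \<in> set Gs" "v \<in> verts H" using \<open>v \<in> verts G\<close> verts_G by auto
    then show ?thesis
      using st_graphD(6,7)[OF st[OF H(1)] H(2)] ends adj_rtranclp_mono[OF sub[OF H(1)]]
        adj_avoiding_rtranclp_mono[OF sub[OF H(1)]] by simp
  qed
  obtain H0 where H0: "H0 \<in> set Gs" using len by (cases Gs) auto
  have "src G \<in> verts G" "tgt G \<in> verts G" "src G \<noteq> tgt G"
    using st_graphD(2-4)[OF st[OF H0]] ends H0 verts_G by auto
  moreover have "finite (verts G)" using verts_G st st_graphD(1) by auto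
  moreover have "\<forall>e\<in>edges G. \<exists>x y. e = {x, y} \<and> x \<noteq> y \<and> x \<in> verts G \<and> y \<in> verts G"
  proof
    fix e assume "e \<in> edges G"
    then obtain H where "H \<in> set Gs" "e \<in> edges H" using edges_G by auto
    then obtain x y where "e = {x, y}" "x \<noteq> y" "x \<in> verts H" "y \<in> verts H"
      using st_graphD(5)[OF st[OF \<open>H \<in> set Gs\<close>]] by blast
    then show "\<exists>x y. e = {x, y} \<and> x \<noteq> y \<and> x \<in> verts G \<and> y \<in> verts G"
      using verts_G \<open>H \<in> set Gs\<close> by blast
  qed
  ultimately show ?thesis using reach unfolding st_graph_def by blast
qed

lemma osp_st_graph: "osp H \<Longrightarrow> st_graph H"
proof (induction rule: osp.induct)
  case (single_edge s t)
  have "(adj {{s, t}})\<^sup>*\<^sup>* s t" by (simp add: adj_def r_into_rtranclp)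
  then show ?case
    using single_edge by (auto simp: st_graph_def verts_def edges_def src_def tgt_def)
next
  case (serial G Gs)
  then interpret serial_decomp G Gs by unfold_locales auto
  show ?case by (rule st_graph_G)
next
  case (parallel G Gs)
  then show ?case using st_graph_parallel by blast
qed

section \<open>Automorphisms fix separating vertices\<close>

lemma aut_orD:
  assumes "\<sigma> \<in> aut_or H"
  shows "bij_betw \<sigma> (verts H) (verts H)"
    "\<And>x y. x \<in> verts H \<Longrightarrow> y \<in> verts H \<Longrightarrow> {x, y} \<in> edges H \<longleftrightarrow> {\<sigma> x, \<sigma> y} \<in> edges H"
    "\<sigma> (src H) = src H" "\<sigma> (tgt H) = tgt H"
  using assms unfolding aut_or_def by auto

lemma aut_or_inj_on: "\<sigma> \<in> aut_or H \<Longrightarrow> inj_on \<sigma> (verts H)"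
  using aut_orD(1) bij_betw_imp_inj_on by blast

lemma aut_or_in_verts: "\<sigma> \<in> aut_or H \<Longrightarrow> x \<in> verts H \<Longrightarrow> \<sigma> x \<in> verts H"
  using aut_orD(1) bij_betwE by blast

lemma id_aut_or: "id \<in> aut_or H"
  unfolding aut_or_def by simp

lemma comp_aut_or:
  assumes \<sigma>: "\<sigma> \<in> aut_or H" and \<rho>: "\<rho> \<in> aut_or H"
  shows "\<sigma> \<circ> \<rho> \<in> aut_or H"
proof -
  have "{x, y} \<in> edges H \<longleftrightarrow> {\<sigma> (\<rho> x), \<sigma> (\<rho> y)} \<in> edges H"
    if "x \<in> verts H" "y \<in> verts H" for x y
    using aut_orD(2)[OF \<rho> that] aut_orD(2)[OF \<sigma>] aut_or_in_verts[OF \<rho>] that by simp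
  then show ?thesis
    using bij_betw_trans[OF aut_orD(1)[OF \<rho>] aut_orD(1)[OF \<sigma>]] aut_orD(3,4)[OF \<sigma>] aut_orD(3,4)[OF \<rho>]
    unfolding aut_or_def by simp
qed

lemma inv_into_aut_or:
  assumes H: "st_graph H" and \<sigma>: "\<sigma> \<in> aut_or H"
  shows "inv_into (verts H) \<sigma> \<in> aut_or H"
proof -
  let ?\<tau> = "inv_into (verts H) \<sigma>"
  have bij: "bij_betw \<sigma> (verts H) (verts H)" using aut_orD(1)[OF \<sigma>] .
  have bij_inv: "bij_betw ?\<tau> (verts H) (verts H)" using bij_betw_inv_into[OF bij] .
  have "{x, y} \<in> edges H \<longleftrightarrow> {?\<tau> x, ?\<tau> y} \<in> edges H" if "x \<in> verts H" "y \<in> verts H" for x y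
  proof -
    have "?\<tau> x \<in> verts H" "?\<tau> y \<in> verts H" using bij_inv that bij_betwE by blast+
    moreover have "\<sigma> (?\<tau> x) = x" "\<sigma> (?\<tau> y) = y"
      using bij that by (simp_all add: bij_betw_inv_into_right)
    ultimately show ?thesis using aut_orD(2)[OF \<sigma>] by metis
  qed
  moreover have "?\<tau> (src H) = src H" "?\<tau> (tgt H) = tgt H"
    using aut_orD(3,4)[OF \<sigma>] st_graphD(2,3)[OF H] bij bij_betw_inv_into_left by metis+
  ultimately show ?thesis using bij_inv unfolding aut_or_def by simp
qed

lemma aut_or_relpow_adj:
  assumes H: "st_graph H" and \<sigma>: "\<sigma> \<in> aut_or H"
  shows "(adj (edges H) ^^ n) (src H) x \<Longrightarrow> (adj (edges H) ^^ n) (src H) (\<sigma> x)"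
proof (induction n arbitrary: x)
  case 0
  then show ?case using aut_orD(3)[OF \<sigma>] by simp
next
  case (Suc n)
  then obtain y where y: "(adj (edges H) ^^ n) (src H) y" "adj (edges H) y x" by auto
  then have "y \<in> verts H" "x \<in> verts H" using st_graph_edge[OF H] unfolding adj_def by auto
  then have "adj (edges H) (\<sigma> y) (\<sigma> x)" using aut_orD(2)[OF \<sigma>] y(2) unfolding adj_def by simp
  then show ?case using Suc.IH[OF y(1)] by auto
qed

lemma aut_or_adj_avoiding:
  assumes H: "st_graph H" and \<sigma>: "\<sigma> \<in> aut_or H" and c: "c \<in> verts H"
  shows "(adj_avoiding (edges H) c)\<^sup>*\<^sup>* x y \<Longrightarrow> (adj_avoiding (edges H) (\<sigma> c))\<^sup>*\<^sup>* (\<sigma> x) (\<sigma> y)"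
proof (induction rule: rtranclp_induct)
  case base
  then show ?case by simp
next
  case (step y z)
  then have e: "{y, z} \<in> edges H" "y \<noteq> c" "z \<noteq> c" unfolding adj_avoiding_def adj_def by auto
  then have v: "y \<in> verts H" "z \<in> verts H" using st_graph_edge[OF H] by auto
  have "{\<sigma> y, \<sigma> z} \<in> edges H" using aut_orD(2)[OF \<sigma> v] e by simp
  moreover have "\<sigma> y \<noteq> \<sigma> c" "\<sigma> z \<noteq> \<sigma> c"
    using aut_or_inj_on[OF \<sigma>] v c e by (metis inj_on_eq_iff)+
  ultimately have "adj_avoiding (edges H) (\<sigma> c) (\<sigma> y) (\<sigma> z)"
    unfolding adj_avoiding_def adj_def by simp
  then show ?case using step.IH by (metis rtranclp.rtrancl_into_rtrancl)
qed

lemma aut_or_adj_avoiding_iff: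
  assumes H: "st_graph H" and \<sigma>: "\<sigma> \<in> aut_or H" and c: "c \<in> verts H" "\<sigma> c = c"
    and v: "v \<in> verts H"
  shows "(adj_avoiding (edges H) c)\<^sup>*\<^sup>* (src H) (\<sigma> v) \<longleftrightarrow> (adj_avoiding (edges H) c)\<^sup>*\<^sup>* (src H) v"
proof
  let ?\<tau> = "inv_into (verts H) \<sigma>"
  have \<tau>: "?\<tau> \<in> aut_or H" using inv_into_aut_or[OF H \<sigma>] .
  have "?\<tau> c = c" "?\<tau> (\<sigma> v) = v"
    using aut_orD(1)[OF \<sigma>] c v bij_betw_inv_into_left by metis+
  moreover assume "(adj_avoiding (edges H) c)\<^sup>*\<^sup>* (src H) (\<sigma> v)"
  ultimately show "(adj_avoiding (edges H) c)\<^sup>*\<^sup>* (src H) v"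
    using aut_or_adj_avoiding[OF H \<tau> c(1)] aut_orD(3)[OF \<tau>] by metis
next
  assume "(adj_avoiding (edges H) c)\<^sup>*\<^sup>* (src H) v"
  then show "(adj_avoiding (edges H) c)\<^sup>*\<^sup>* (src H) (\<sigma> v)"
    using aut_or_adj_avoiding[OF H \<sigma> c(1)] aut_orD(3)[OF \<sigma>] c(2) by metis
qed

definition separates_st :: "ograph \<Rightarrow> nat \<Rightarrow> bool" where
  "separates_st H c \<longleftrightarrow> c \<in> verts H \<and> c \<noteq> src H \<and> c \<noteq> tgt H \<and>
     \<not> (adj_avoiding (edges H) c)\<^sup>*\<^sup>* (src H) (tgt H)"

text \<open>A shortest walk from the source to \<open>c\<close> avoids \<open>c'\<close> and vice versa, so a walk
  from \<open>c\<close> to the target would yield a source-target walk avoiding \<open>c\<close> or \<open>c'\<close>.\<close>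

lemma separating_vertices_eq_if_same_distance:
  assumes H: "st_graph H" and c: "separates_st H c" and c': "separates_st H c'"
    and same_dist: "\<And>n. (adj (edges H) ^^ n) (src H) c \<longleftrightarrow> (adj (edges H) ^^ n) (src H) c'"
  shows "c = c'"
proof (rule ccontr)
  assume ne: "c \<noteq> c'"
  let ?R = "adj (edges H)" and ?s = "src H" and ?t = "tgt H"
  have "?R\<^sup>*\<^sup>* ?s c" using st_graphD(6)[OF H] c unfolding separates_st_def by blast
  then obtain n where "(?R ^^ n) ?s c" using rtranclp_imp_relpowp by metis
  define d where "d = (LEAST n. (?R ^^ n) ?s c)"
  have d: "(?R ^^ d) ?s c" "(?R ^^ d) ?s c'" unfolding d_def
    using LeastI[of "\<lambda>n. (?R ^^ n) ?s c", OF \<open>(?R ^^ n) ?s c\<close>] same_dist by simp_all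
  have shorter: "\<forall>m<d. \<not> (?R ^^ m) ?s c" "\<forall>m<d. \<not> (?R ^^ m) ?s c'"
    unfolding d_def using not_less_Least same_dist by blast+
  have to_c: "(adj_avoiding (edges H) c')\<^sup>*\<^sup>* ?s c"
    and to_c': "(adj_avoiding (edges H) c)\<^sup>*\<^sup>* ?s c'"
    using adj_avoiding_rtranclp_if_closer d shorter ne by auto
  have src_ne: "?s \<noteq> c" "?s \<noteq> c'" using c c' unfolding separates_st_def by auto
  have "?R\<^sup>*\<^sup>* c ?t"
    using adj_rtranclp_sym[OF \<open>?R\<^sup>*\<^sup>* ?s c\<close>] st_graphD(6)[OF H st_graphD(3)[OF H]]
    by (metis rtranclp_trans)
  then have "(adj_avoiding (edges H) c)\<^sup>*\<^sup>* ?s ?t \<or> (adj_avoiding (edges H) c')\<^sup>*\<^sup>* ?s ?t"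
  proof (induction rule: rtranclp_induct)
    case base
    then show ?case using to_c by simp
  next
    case (step u w)
    show ?case
    proof (cases "w = c \<or> w = c'")
      case True
      then show ?thesis using to_c to_c' by auto
    next
      case False
      then show ?thesis using step.IH
        by (metis step.hyps(2) adj_avoiding_def adj_avoiding_rtranclp_avoids src_ne
            rtranclp.rtrancl_into_rtrancl)
    qed
  qed
  then show False using c c' unfolding separates_st_def by blast
qed

lemma aut_or_fixes_separating:
  assumes H: "st_graph H" and \<sigma>: "\<sigma> \<in> aut_or H" and c: "separates_st H c"
  shows "\<sigma> c = c"
proof -
  let ?\<tau> = "inv_into (verts H) \<sigma>"
  have \<tau>: "?\<tau> \<in> aut_or H" using inv_into_aut_or[OF H \<sigma>] .
  have cV: "c \<in> verts H" using c unfolding separates_st_def by simp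
  have \<tau>\<sigma>c: "?\<tau> (\<sigma> c) = c" using aut_orD(1)[OF \<sigma>] cV bij_betw_inv_into_left by metis
  have \<sigma>cV: "\<sigma> c \<in> verts H" using aut_or_in_verts[OF \<sigma> cV] .
  have "\<sigma> c \<noteq> src H" "\<sigma> c \<noteq> tgt H"
    using aut_orD(3,4)[OF \<sigma>] aut_or_inj_on[OF \<sigma>] cV st_graphD(2,3)[OF H] c
    unfolding separates_st_def by (metis inj_on_eq_iff)+
  moreover have "\<not> (adj_avoiding (edges H) (\<sigma> c))\<^sup>*\<^sup>* (src H) (tgt H)"
  proof
    assume "(adj_avoiding (edges H) (\<sigma> c))\<^sup>*\<^sup>* (src H) (tgt H)"
    then have "(adj_avoiding (edges H) (?\<tau> (\<sigma> c)))\<^sup>*\<^sup>* (?\<tau> (src H)) (?\<tau> (tgt H))"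
      using aut_or_adj_avoiding[OF H \<tau> \<sigma>cV] by blast
    then show False using \<tau>\<sigma>c aut_orD(3,4)[OF \<tau>] c unfolding separates_st_def by simp
  qed
  ultimately have "separates_st H (\<sigma> c)" using \<sigma>cV unfolding separates_st_def by simp
  moreover have "(adj (edges H) ^^ n) (src H) (\<sigma> c) \<longleftrightarrow> (adj (edges H) ^^ n) (src H) c" for n
    using aut_or_relpow_adj[OF H \<sigma>, of n c] aut_or_relpow_adj[OF H \<tau>, of n "\<sigma> c"] \<tau>\<sigma>c by auto
  ultimately show ?thesis using separating_vertices_eq_if_same_distance[OF H _ c] by blast
qed

context serial_decomp
begin

lemma separates_st_tgt: "i < k - 1 \<Longrightarrow> separates_st G (t i)"
proof -
  assume i: "i < k - 1"
  then have "i < k" by simp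
  have "\<not> reach_avoiding (t i) (tgt G)"
    using reach_avoiding_tgtD[OF \<open>i < k\<close>] tgt_G_notin i by fastforce
  then show ?thesis
    unfolding separates_st_def
    using tgt_in[OF \<open>i < k\<close>] verts_part_subset[OF \<open>i < k\<close>] src_G_ne_tgt[OF \<open>i < k\<close>]
      tgt_G_notin[OF i]
    by auto
qed

lemma aut_or_fixes_tgt:
  assumes \<sigma>: "\<sigma> \<in> aut_or G" and i: "i < k"
  shows "\<sigma> (t i) = t i"
proof (cases "i = k - 1")
  case True
  then show ?thesis using tgt_last aut_orD(4)[OF \<sigma>] by simp
next
  case False
  then show ?thesis using aut_or_fixes_separating[OF st_graph_G \<sigma> separates_st_tgt] i by simp
qed

lemma aut_or_fixes_src:
  assumes \<sigma>: "\<sigma> \<in> aut_or G" and i: "i < k"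
  shows "\<sigma> (s i) = s i"
proof (cases i)
  case 0
  then show ?thesis using src_first aut_orD(3)[OF \<sigma>] by simp
next
  case (Suc j)
  then show ?thesis using tgt_eq_src_Suc[of j] aut_or_fixes_tgt[OF \<sigma>, of j] i by simp
qed

lemma verts_part_iff:
  assumes i: "i < k" and v: "v \<in> verts G"
  shows "v \<in> V i \<longleftrightarrow> v = t i \<or> (reach_avoiding (t i) v \<and> (v = s i \<or> \<not> reach_avoiding (s i) v))"
proof
  assume vi: "v \<in> V i"
  have "\<not> reach_avoiding (s i) v" if ne: "v \<noteq> s i" "v \<noteq> t i"
  proof
    assume reach: "reach_avoiding (s i) v"
    show False
    proof (cases i)
      case 0
      then have "(adj_avoiding (edges G) (s i))\<^sup>*\<^sup>* (s i) v" using reach src_first by simp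
      then show False using ne(1) adj_avoiding_rtranclp_from_avoided by blast
    next
      case (Suc j)
      then have "s i = t j" "j < k" using tgt_eq_src_Suc[of j] i by auto
      then obtain m where m: "m \<le> j" "v \<in> V m" using reach_avoiding_tgtD[of j v] reach by auto
      then have "v = s i" using verts_Int_less[of m i v] vi i Suc by simp
      then show False using ne(1) by simp
    qed
  qed
  moreover have "v \<noteq> t i \<Longrightarrow> reach_avoiding (t i) v" using reach_avoiding_tgt[OF i order_refl vi] .
  ultimately show "v = t i \<or> (reach_avoiding (t i) v \<and> (v = s i \<or> \<not> reach_avoiding (s i) v))"
    by blast
next
  assume "v = t i \<or> (reach_avoiding (t i) v \<and> (v = s i \<or> \<not> reach_avoiding (s i) v))"
  then consider (tgt) "v = t i" | (src) "v = s i"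
    | (inner) "reach_avoiding (t i) v" "\<not> reach_avoiding (s i) v"
    by blast
  then show "v \<in> V i"
  proof cases
    case inner
    then obtain m where m: "m \<le> i" "v \<in> V m" using reach_avoiding_tgtD[OF i] by blast
    show ?thesis
    proof (rule ccontr)
      assume "v \<notin> V i"
      then have "m < i" using m by (cases "m = i") auto
      then obtain j where j: "i = Suc j" "m \<le> j" by (cases i) auto
      then have "s i = t j" using tgt_eq_src_Suc[of j] i by simp
      moreover have "v \<noteq> t j" using \<open>v \<notin> V i\<close> src_in[OF i] calculation by auto
      ultimately have "reach_avoiding (s i) v" using reach_avoiding_tgt[of j m v] j m i by simp
      then show False using inner by simp
    qed
  qed (use tgt_in[OF i] src_in[OF i] in simp_all)
qed

lemma aut_or_image_part:
  assumes \<sigma>: "\<sigma> \<in> aut_or G" and i: "i < k"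
  shows "\<sigma> ` V i = V i"
proof (rule endo_inj_surj)
  have sub: "V i \<subseteq> verts G" using verts_part_subset[OF i] .
  show "finite (V i)" using st_graphD(1)[OF st_graph_part[OF i]] .
  show "inj_on \<sigma> (V i)" using aut_or_inj_on[OF \<sigma>] sub by (rule inj_on_subset)
  show "\<sigma> ` V i \<subseteq> V i"
  proof
    fix w assume "w \<in> \<sigma> ` V i"
    then obtain v where v: "v \<in> V i" "w = \<sigma> v" by blast
    have vG: "v \<in> verts G" using v(1) sub by blast
    have "\<sigma> v = c \<longleftrightarrow> v = c" if "c \<in> verts G" "\<sigma> c = c" for c
      using aut_or_inj_on[OF \<sigma>] vG that by (metis inj_on_eq_iff)
    moreover have "s i \<in> verts G" "t i \<in> verts G" using src_in[OF i] tgt_in[OF i] sub by auto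
    ultimately show "w \<in> V i"
      using v verts_part_iff[OF i vG] verts_part_iff[OF i aut_or_in_verts[OF \<sigma> vG]]
        aut_or_fixes_src[OF \<sigma> i] aut_or_fixes_tgt[OF \<sigma> i]
        aut_or_adj_avoiding_iff[OF st_graph_G \<sigma> _ _ vG, of "s i"]
        aut_or_adj_avoiding_iff[OF st_graph_G \<sigma> _ _ vG, of "t i"]
      by simp
  qed
qed

lemma aut_or_edge_in_part_iff:
  assumes \<sigma>: "\<sigma> \<in> aut_or G" and i: "i < k" and e: "e \<in> edges G"
  shows "\<sigma> ` e \<in> E i \<longleftrightarrow> e \<in> E i"
proof -
  obtain x y where xy: "e = {x, y}" "x \<in> verts G" "y \<in> verts G"
    using st_graphD(5)[OF st_graph_G] e by blast
  have \<sigma>e: "\<sigma> ` e \<in> edges G" using aut_orD(2)[OF \<sigma> xy(2,3)] e xy(1) by simp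
  have "\<sigma> z \<in> V i \<longleftrightarrow> z \<in> V i" if "z \<in> verts G" for z
    using aut_or_image_part[OF \<sigma> i] aut_or_inj_on[OF \<sigma>] verts_part_subset[OF i] that
    by (metis image_eqI inj_on_image_mem_iff)
  then show ?thesis
    using edge_in_part_iff_subset[OF \<sigma>e i] edge_in_part_iff_subset[OF e i] xy by simp
qed

lemma aut_or_restrict_part:
  assumes \<sigma>: "\<sigma> \<in> aut_or G" and i: "i < k"
  shows "\<sigma> \<in> aut_or (Gs ! i)"
proof -
  have sub: "V i \<subseteq> verts G" using verts_part_subset[OF i] .
  have "bij_betw \<sigma> (V i) (V i)"
    using aut_or_image_part[OF \<sigma> i] inj_on_subset[OF aut_or_inj_on[OF \<sigma>] sub]
    unfolding bij_betw_def by blast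
  moreover have "{x, y} \<in> E i \<longleftrightarrow> {\<sigma> x, \<sigma> y} \<in> E i" if "x \<in> V i" "y \<in> V i" for x y
  proof -
    have "x \<in> verts G" "y \<in> verts G" using that sub by auto
    then have "{x, y} \<in> edges G \<longleftrightarrow> {\<sigma> x, \<sigma> y} \<in> edges G" by (rule aut_orD(2)[OF \<sigma>])
    moreover have "{x, y} \<in> edges G \<longleftrightarrow> {x, y} \<in> E i"
      using edges_part_subset[OF i] edge_in_part_iff_subset[OF _ i] that by blast
    ultimately show ?thesis using aut_or_edge_in_part_iff[OF \<sigma> i, of "{x, y}"] edges_part_subset[OF i] by auto
  qed
  ultimately show ?thesis
    using aut_or_fixes_src[OF \<sigma> i] aut_or_fixes_tgt[OF \<sigma> i] unfolding aut_or_def by simp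
qed

end

section \<open>Near trees and their orbits\<close>

lemma cycle_edges_distinct:
  assumes L: "3 \<le> length cs" and d: "distinct cs"
    and q: "q < length cs" and j: "j < length cs" and "q \<noteq> j"
  shows "{cs ! q, cs ! ((q + 1) mod length cs)} \<noteq> {cs ! j, cs ! ((j + 1) mod length cs)}"
proof
  let ?L = "length cs"
  assume eq: "{cs ! q, cs ! ((q + 1) mod ?L)} = {cs ! j, cs ! ((j + 1) mod ?L)}"
  have "0 < ?L" using q by linarith
  then have succ_lt: "(q + 1) mod ?L < ?L" "(j + 1) mod ?L < ?L" by simp_all
  have "cs ! q \<noteq> cs ! j" using nth_eq_iff_index_eq[OF d q j] \<open>q \<noteq> j\<close> by simp
  then have "q = (j + 1) mod ?L" "(q + 1) mod ?L = j"
    using eq nth_eq_iff_index_eq[OF d q succ_lt(2)] nth_eq_iff_index_eq[OF d succ_lt(1) j]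
    by (auto simp: doubleton_eq_iff)
  then have "(j + 2) mod ?L = j" by (simp add: mod_Suc_eq)
  then show False using L j by (cases "j + 2 < ?L") (auto simp: le_mod_geq)
qed

lemma connected_on_Diff_cycle_edge:
  assumes L: "3 \<le> length cs" and d: "distinct cs"
    and cycle: "\<forall>i<length cs. {cs ! i, cs ! ((i + 1) mod length cs)} \<in> S"
    and j: "j < length cs" and conn: "connected_on V S"
  shows "connected_on V (S - {{cs ! j, cs ! ((j + 1) mod length cs)}})"
proof -
  let ?L = "length cs"
  define f where "f = {cs ! j, cs ! ((j + 1) mod ?L)}"
  define S' where "S' = S - {f}"
  define p where "p a = cs ! ((j + 1 + a) mod ?L)" for a
  have path: "(adj S')\<^sup>*\<^sup>* (p 0) (p a)" if "a < ?L" for a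
    using that
  proof (induction a)
    case 0
    then show ?case by simp
  next
    case (Suc a)
    define q where "q = (j + 1 + a) mod ?L"
    have "0 < ?L" using j by linarith
    then have q: "q < ?L" unfolding q_def by simp
    have "q \<noteq> j"
    proof
      assume "q = j"
      then show False using Suc.prems j unfolding q_def
        by (cases "j + 1 + a < ?L") (auto simp: le_mod_geq)
    qed
    have "{cs ! q, cs ! ((q + 1) mod ?L)} \<in> S" using cycle q by simp
    moreover have "{cs ! q, cs ! ((q + 1) mod ?L)} \<noteq> f"
      unfolding f_def using cycle_edges_distinct[OF L d q j \<open>q \<noteq> j\<close>] .
    moreover have "(q + 1) mod ?L = (j + 1 + Suc a) mod ?L" unfolding q_def by (simp add: mod_Suc_eq)
    ultimately have "adj S' (p a) (p (Suc a))" unfolding adj_def S'_def p_def q_def by simp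
    then show ?case using Suc by (metis Suc_lessD rtranclp.rtrancl_into_rtrancl)
  qed
  have "j + 1 + (?L - 1) = j + ?L" using L by simp
  then have "p (?L - 1) = cs ! j" unfolding p_def using j by simp
  then have around: "(adj S')\<^sup>*\<^sup>* (cs ! ((j + 1) mod ?L)) (cs ! j)"
    using path[of "?L - 1"] L unfolding p_def by simp
  have step: "(adj S')\<^sup>*\<^sup>* x y" if "adj S x y" for x y
  proof (cases "{x, y} = f")
    case True
    then have "(x = cs ! j \<and> y = cs ! ((j + 1) mod ?L)) \<or> (x = cs ! ((j + 1) mod ?L) \<and> y = cs ! j)"
      unfolding f_def by (simp add: doubleton_eq_iff)
    then show ?thesis using around adj_rtranclp_sym[OF around] by auto
  next
    case False
    then have "adj S' x y" using that unfolding adj_def S'_def by simp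
    then show ?thesis by simp
  qed
  have "(adj S)\<^sup>*\<^sup>* u v \<Longrightarrow> (adj S')\<^sup>*\<^sup>* u v" for u v
    by (induction rule: rtranclp_induct) (use step in \<open>auto intro: rtranclp_trans\<close>)
  then show ?thesis using conn unfolding connected_on_iff_adj S'_def f_def by blast
qed

text \<open>An edge-minimal connected graph between \<open>T\<close> and \<open>S\<^sub>0\<close> is acyclic: every cycle has an edge
  outside the acyclic \<open>T\<close>, and deleting it keeps the graph connected.\<close>

lemma acyclic_connected_between:
  assumes "finite S\<^sub>0" "T \<subseteq> S\<^sub>0" "connected_on V S\<^sub>0" "acyclic_edges T"
  shows "\<exists>S. T \<subseteq> S \<and> S \<subseteq> S\<^sub>0 \<and> connected_on V S \<and> acyclic_edges S"
proof -
  define P where "P S \<longleftrightarrow> T \<subseteq> S \<and> S \<subseteq> S\<^sub>0 \<and> connected_on V S" for S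
  obtain S where S: "P S" and min: "\<And>S'. P S' \<Longrightarrow> card S \<le> card S'"
    using ex_has_least_nat[of P S\<^sub>0 card] assms(2,3) unfolding P_def by blast
  have "finite S" using S assms(1) finite_subset unfolding P_def by blast
  have "acyclic_edges S"
    unfolding acyclic_edges_def
  proof
    assume "\<exists>cs. 3 \<le> length cs \<and> distinct cs \<and> (\<forall>i<length cs. {cs ! i, cs ! ((i + 1) mod length cs)} \<in> S)"
    then obtain cs where cs: "3 \<le> length cs" "distinct cs"
      "\<forall>i<length cs. {cs ! i, cs ! ((i + 1) mod length cs)} \<in> S" by blast
    then obtain j where j: "j < length cs" "{cs ! j, cs ! ((j + 1) mod length cs)} \<notin> T"
      using assms(4) unfolding acyclic_edges_def by blast
    let ?f = "{cs ! j, cs ! ((j + 1) mod length cs)}"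
    have "P (S - {?f})"
      using S j connected_on_Diff_cycle_edge[OF cs j(1)] unfolding P_def by blast
    moreover have "card (S - {?f}) < card S"
      using card_Diff1_less[OF \<open>finite S\<close>] cs(3) j(1) by blast
    ultimately show False using min by fastforce
  qed
  then show ?thesis using S unfolding P_def by blast
qed

lemma near_trees_subset: "F \<in> near_trees V E \<Longrightarrow> F \<subseteq> E"
  unfolding near_trees_def spanning_tree_def by auto

lemma finite_near_trees: "finite E \<Longrightarrow> finite (near_trees V E)"
proof -
  have "near_trees V E \<subseteq> Pow E" using near_trees_subset by blast
  then show "finite E \<Longrightarrow> finite (near_trees V E)" using finite_subset by auto
qed

definition nt_orbit :: "ograph \<Rightarrow> nat set set \<Rightarrow> nat set set set" where
  "nt_orbit H A = {B \<in> near_trees (verts H) (edges H). \<exists>\<sigma>\<in>aut_or H. A = img_edges \<sigma> B}"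

lemma nt_orbits_eq_image: "nt_orbits H = nt_orbit H ` near_trees (verts H) (edges H)"
  unfolding nt_orbits_def nt_orbit_def by simp

lemma nt_orbit_self: "A \<in> near_trees (verts H) (edges H) \<Longrightarrow> A \<in> nt_orbit H A"
proof -
  have "A = img_edges id A" by (simp add: img_edges_def)
  then show "A \<in> near_trees (verts H) (edges H) \<Longrightarrow> A \<in> nt_orbit H A"
    using id_aut_or unfolding nt_orbit_def by blast
qed

lemma img_edges_comp: "img_edges (\<sigma> \<circ> \<rho>) B = img_edges \<sigma> (img_edges \<rho> B)"
  unfolding img_edges_def by (simp add: image_image image_comp)

lemma img_edges_inv_into:
  assumes H: "st_graph H" and \<sigma>: "\<sigma> \<in> aut_or H" and B: "B \<subseteq> edges H"
  shows "img_edges (inv_into (verts H) \<sigma>) (img_edges \<sigma> B) = B"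
proof -
  have "inv_into (verts H) \<sigma> ` \<sigma> ` e = e" if "e \<in> B" for e
    using inv_into_image_cancel[OF aut_or_inj_on[OF \<sigma>]] st_graph_edge_subset[OF H] B that by blast
  then show ?thesis unfolding img_edges_def by (simp add: image_image)
qed

lemma nt_orbit_img_edges:
  assumes H: "st_graph H" and \<sigma>: "\<sigma> \<in> aut_or H" and B: "B \<subseteq> edges H"
  shows "nt_orbit H (img_edges \<sigma> B) = nt_orbit H B"
proof (intro equalityI subsetI)
  fix A assume "A \<in> nt_orbit H (img_edges \<sigma> B)"
  then obtain \<rho> where \<rho>: "A \<in> near_trees (verts H) (edges H)" "\<rho> \<in> aut_or H"
    "img_edges \<sigma> B = img_edges \<rho> A"
    unfolding nt_orbit_def by blast
  let ?\<tau> = "inv_into (verts H) \<sigma>"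
  have "B = img_edges (?\<tau> \<circ> \<rho>) A"
    using img_edges_inv_into[OF H \<sigma> B] \<rho>(3) img_edges_comp by metis
  then show "A \<in> nt_orbit H B"
    using \<rho>(1) comp_aut_or[OF inv_into_aut_or[OF H \<sigma>] \<rho>(2)] unfolding nt_orbit_def by blast
next
  fix A assume "A \<in> nt_orbit H B"
  then obtain \<rho> where \<rho>: "A \<in> near_trees (verts H) (edges H)" "\<rho> \<in> aut_or H" "B = img_edges \<rho> A"
    unfolding nt_orbit_def by blast
  then have "img_edges \<sigma> B = img_edges (\<sigma> \<circ> \<rho>) A" using img_edges_comp by metis
  then show "A \<in> nt_orbit H (img_edges \<sigma> B)"
    using \<rho>(1) comp_aut_or[OF \<sigma> \<rho>(2)] unfolding nt_orbit_def by blast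
qed

lemma card_image_le_if_factors:
  assumes "finite (f ` A)" and "\<And>x y. x \<in> A \<Longrightarrow> y \<in> A \<Longrightarrow> f x = f y \<Longrightarrow> g x = g y"
  shows "card (g ` A) \<le> card (f ` A)"
proof -
  have "g x = g (inv_into A f (f x))" if "x \<in> A" for x
  proof (rule assms(2)[OF that])
    show "inv_into A f (f x) \<in> A" using that by (blast intro: inv_into_into)
    show "f x = f (inv_into A f (f x))" using that by (simp add: f_inv_into_f)
  qed
  then have "g ` A = (\<lambda>z. g (inv_into A f z)) ` f ` A"
    unfolding image_image by (rule image_cong[OF refl])
  then show ?thesis using card_image_le[OF assms(1)] by simp
qed

section \<open>Orbit counting for serial superedges\<close>

context serial_decomp
begin

lemma near_tree_part_extends:
  assumes i: "i < k" and B: "B \<in> near_trees (V i) (E i)"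
  shows "\<exists>F\<in>near_trees (verts G) (edges G). F \<inter> E i = B"
proof -
  obtain T e where T: "spanning_tree (V i) (E i) T" "e \<in> T" "B = T - {e}"
    using B unfolding near_trees_def by blast
  have T_sub: "T \<subseteq> E i" and T_conn: "connected_on (V i) T" and T_acyc: "acyclic_edges T"
    using T(1) unfolding spanning_tree_def by auto
  define S\<^sub>0 where "S\<^sub>0 = T \<union> (edges G - E i)"
  define X where "X m = (if m = i then T else E m)" for m
  have "connected_on (verts G) (\<Union>m<k. X m)"
    by (rule connected_on_Union_parts) (use T_conn st_graph_connected[OF st_graph_part] in \<open>simp add: X_def\<close>)
  moreover have "(\<Union>m<k. X m) \<subseteq> S\<^sub>0"
    using edges_part_subset edge_part_unique[OF _ i] unfolding X_def S\<^sub>0_def by auto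
  ultimately have "connected_on (verts G) S\<^sub>0" by (rule connected_on_mono)
  moreover have "S\<^sub>0 \<subseteq> edges G" using T_sub edges_part_subset[OF i] unfolding S\<^sub>0_def by blast
  moreover have "T \<subseteq> S\<^sub>0" unfolding S\<^sub>0_def by blast
  ultimately obtain S where S: "T \<subseteq> S" "S \<subseteq> S\<^sub>0" "connected_on (verts G) S" "acyclic_edges S"
    using acyclic_connected_between[of S\<^sub>0 T] st_graph_finite_edges[OF st_graph_G] T_acyc
      finite_subset by metis
  then have "spanning_tree (verts G) (edges G) S"
    using \<open>S\<^sub>0 \<subseteq> edges G\<close> unfolding spanning_tree_def by blast
  then have "S - {e} \<in> near_trees (verts G) (edges G)" using S(1) T(2) unfolding near_trees_def by blast
  moreover have "(S - {e}) \<inter> E i = B" using S(1,2) T_sub T(3) unfolding S\<^sub>0_def by blast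
  ultimately show ?thesis by blast
qed

lemma img_edges_Int_part:
  assumes \<sigma>: "\<sigma> \<in> aut_or G" and i: "i < k" and F: "F \<subseteq> edges G"
  shows "img_edges \<sigma> F \<inter> E i = img_edges \<sigma> (F \<inter> E i)"
proof -
  have "\<sigma> ` e \<in> E i \<longleftrightarrow> e \<in> E i" if "e \<in> F" for e
    using aut_or_edge_in_part_iff[OF \<sigma> i] F that by blast
  then show ?thesis unfolding img_edges_def by auto
qed

lemma card_nt_orbits_part_le:
  assumes i: "i < k"
  shows "card (nt_orbits (Gs ! i)) \<le> card (nt_orbits G)"
proof -
  let ?NH = "near_trees (V i) (E i)" and ?NG = "near_trees (verts G) (edges G)"
  define ext where "ext B = (SOME F. F \<in> ?NG \<and> F \<inter> E i = B)" for B
  have ext: "ext B \<in> ?NG \<and> ext B \<inter> E i = B" if "B \<in> ?NH" for B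
    using near_tree_part_extends[OF i that] unfolding ext_def by (rule someI_ex[OF bexE]) blast
  have factors: "nt_orbit (Gs ! i) B\<^sub>1 = nt_orbit (Gs ! i) B\<^sub>2"
    if B: "B\<^sub>1 \<in> ?NH" "B\<^sub>2 \<in> ?NH"
      and same: "nt_orbit G (ext B\<^sub>1) = nt_orbit G (ext B\<^sub>2)" for B\<^sub>1 B\<^sub>2
  proof -
    have "ext B\<^sub>2 \<in> nt_orbit G (ext B\<^sub>1)" using nt_orbit_self ext[OF B(2)] same by blast
    then obtain \<sigma> where \<sigma>: "\<sigma> \<in> aut_or G" "ext B\<^sub>1 = img_edges \<sigma> (ext B\<^sub>2)"
      unfolding nt_orbit_def by blast
    have "B\<^sub>1 = img_edges \<sigma> (ext B\<^sub>2) \<inter> E i" using ext[OF B(1)] \<sigma>(2) by simp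
    also have "\<dots> = img_edges \<sigma> B\<^sub>2"
      using img_edges_Int_part[OF \<sigma>(1) i near_trees_subset[of _ "verts G"]] ext[OF B(2)] by simp
    finally show ?thesis
      using nt_orbit_img_edges[OF st_graph_part[OF i] aut_or_restrict_part[OF \<sigma>(1) i]]
        near_trees_subset[OF B(2)] by simp
  qed
  have "card (nt_orbit (Gs ! i) ` ?NH) \<le> card ((\<lambda>B. nt_orbit G (ext B)) ` ?NH)"
  proof (rule card_image_le_if_factors)
    show "finite ((\<lambda>B. nt_orbit G (ext B)) ` ?NH)"
      using finite_near_trees[OF st_graph_finite_edges[OF st_graph_part[OF i]]] by simp
  qed (rule factors)
  also have "\<dots> \<le> card (nt_orbit G ` ?NG)"
  proof (rule card_mono)
    show "finite (nt_orbit G ` ?NG)"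
      using finite_near_trees[OF st_graph_finite_edges[OF st_graph_G]] by simp
    show "(\<lambda>B. nt_orbit G (ext B)) ` ?NH \<subseteq> nt_orbit G ` ?NG" using ext by blast
  qed
  finally show ?thesis unfolding nt_orbits_eq_image .
qed

text \<open>The sets \<open>V i - {s i}\<close> are disjoint and each contains \<open>t i\<close>.\<close>

lemma sum_card_verts_parts_le: "(\<Sum>i<k. card (V i)) \<le> 2 * card (verts G)"
proof -
  define W where "W i = V i - {s i}" for i
  have fin: "finite (V i)" if "i < k" for i using st_graphD(1)[OF st_graph_part[OF that]] .
  have "W i \<inter> W j = {}" if "i < k" "j < k" "i \<noteq> j" for i j
    using verts_Int_less[of i j] verts_Int_less[of j i] that unfolding W_def
    by (cases "i < j") auto
  then have "(\<Sum>i<k. card (W i)) = card (\<Union>i<k. W i)"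
    using fin unfolding W_def by (intro card_UN_disjoint[symmetric]) auto
  also have "\<dots> \<le> card (verts G)"
    using finite_verts_G verts_G unfolding W_def by (intro card_mono) auto
  finally have sum_W: "(\<Sum>i<k. card (W i)) \<le> card (verts G)" .
  have "card (V i) \<le> 2 * card (W i)" if i: "i < k" for i
  proof -
    have "t i \<in> W i" unfolding W_def using tgt_in[OF i] src_ne_tgt[OF i] by auto
    then have "card (W i) \<ge> 1" using fin[OF i] card_gt_0_iff[of "W i"] unfolding W_def by auto
    moreover have "card (W i) = card (V i) - 1"
      unfolding W_def using src_in[OF i] fin[OF i] by (simp add: card_Diff_singleton)
    ultimately show ?thesis by linarith
  qed
  then have "(\<Sum>i<k. card (V i)) \<le> (\<Sum>i<k. 2 * card (W i))" by (intro sum_mono) simp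
  then show ?thesis using sum_W by (simp add: sum_distrib_left[symmetric])
qed

end

theorem lemma5p14:
  shows "\<exists>C::real. C > 0 \<and>
    (\<forall>G Gs. serial_superedge_with G Gs \<and> (\<forall>H\<in>set Gs. non_serial H) \<longrightarrow>
      (\<Sum>i<length Gs. real (card (verts (Gs ! i))) * real (card (nt_orbits (Gs ! i))))
        \<le> C * real (card (verts G)) * real (card (nt_orbits G)))"
proof (intro exI[of _ 2] conjI allI impI)
  fix G Gs
  assume "serial_superedge_with G Gs \<and> (\<forall>H\<in>set Gs. non_serial H)"
  then interpret serial_decomp G Gs
    using osp_st_graph unfolding serial_superedge_with_def by unfold_locales auto
  let ?N = "real (card (nt_orbits G))"
  have "(\<Sum>i<k. real (card (V i)) * real (card (nt_orbits (Gs ! i)))) \<le> (\<Sum>i<k. real (card (V i)) * ?N)"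
    using card_nt_orbits_part_le by (intro sum_mono mult_left_mono) auto
  also have "\<dots> = real (\<Sum>i<k. card (V i)) * ?N" by (simp add: sum_distrib_right)
  also have "\<dots> \<le> real (2 * card (verts G)) * ?N"
    by (rule mult_right_mono) (use sum_card_verts_parts_le in \<open>simp only: of_nat_le_iff\<close>, simp)
  finally show "(\<Sum>i<k. real (card (V i)) * real (card (nt_orbits (Gs ! i))))
      \<le> 2 * real (card (verts G)) * ?N" by simp
qed simp

end
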